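(* Let $n\ge 1$ and let $k_1,\ldots,k_n\ge 3$ be integers. The disjoint union of cycles $\bigcup_{i=1}^n C_{k_i}$ is odd prime.
   Context: All graphs are finite and simple. A graph $G$ of order $N$ is called odd prime if there is a bijection $\ell$ from $V(G)$ to the set of odd integers $\{1,3,\ldots,2N-1\}$ such that $\gcd(\ell(u),\ell(v))=1$ for every edge $uv$ of $G$. $C_k$ denotes the cycle on $k$ vertices. *)

theory Defs
  imports Main
begin

definition odd_prime :: "'a set \<Rightarrow> ('a \<Rightarrow> 'a \<Rightarrow> bool) \<Rightarrow> bool" where
  "odd_prime V E \<longleftrightarrow>
     (\<exists>l :: 'a \<Rightarrow> nat. bij_betw l V {m. odd m \<and> m \<le> 2 * card V - 1} \<and>
        (\<forall>u\<in>V. \<forall>v\<in>V. E u v \<longrightarrow> gcd (l u) (l v) = 1))"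

text \<open>Disjoint union of cycles C_{k 0}, ..., C_{k (n-1)}: vertex (i,j) is the j-th
vertex of the i-th cycle, j < k i.\<close>

definition cycles_union_vertices :: "nat \<Rightarrow> (nat \<Rightarrow> nat) \<Rightarrow> (nat \<times> nat) set" where
  "cycles_union_vertices n k = {(i, j). i < n \<and> j < k i}"

definition cycles_union_edge :: "(nat \<Rightarrow> nat) \<Rightarrow> nat \<times> nat \<Rightarrow> nat \<times> nat \<Rightarrow> bool" where
  "cycles_union_edge k u v \<longleftrightarrow>
     fst u = fst v \<and>
     (snd v = (snd u + 1) mod k (fst u) \<or> snd u = (snd v + 1) mod k (fst u))"

end

theory Submission
  imports Defs
begin

(* Number the vertices 0, ..., N-1 so that each cycle C_k receives a block of k consecutive
   numbers, placed around the cycle in the order 0, 2, 4, ..., 5, 3, 1 (relative to the block).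
   Then adjacent vertices get numbers at distance 1 or 2, and the label 2m+1 of the vertex
   numbered m makes adjacent labels odd numbers differing by 2 or 4, a power of two;
   such numbers are coprime. *)

lemma coprime_odd_add_power_two:
  fixes a :: nat
  assumes "odd a"
  shows "coprime a (a + 2 ^ m)"
proof -
  have "coprime a (2 ^ m)"
    using assms by (cases m) simp_all
  then show ?thesis
    by (simp add: coprime_iff_gcd_eq_1 gcd.commute[of a] add.commute[of a])
qed

lemma coprime_odd_if_dist_one_or_two:
  fixes x y :: nat
  assumes "\<bar>int x - int y\<bar> \<in> {1, 2}"
  shows "coprime (2 * x + 1) (2 * y + 1)"
proof -
  have "coprime (2 * a + 1) (2 * b + 1)" if "b = a + 1 \<or> b = a + 2" for a b :: nat
  proof -
    have "2 * b + 1 = (2 * a + 1) + 2 ^ (b - a)"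
      using that by auto
    then show ?thesis
      using coprime_odd_add_power_two[of "2 * a + 1" "b - a"] by simp
  qed
  moreover have "y = x + 1 \<or> y = x + 2 \<or> x = y + 1 \<or> x = y + 2"
    using assms by auto
  ultimately show ?thesis
    by (metis coprime_commute)
qed

definition zigzag :: "nat \<Rightarrow> nat \<Rightarrow> nat" where
  "zigzag K j = (if 2 * j < K then 2 * j else 2 * (K - 1 - j) + 1)"

lemma zigzag_less: "j < K \<Longrightarrow> zigzag K j < K"
  unfolding zigzag_def by auto

lemma inj_on_zigzag: "inj_on (zigzag K) {..<K}"
  unfolding zigzag_def inj_on_def by (auto split: if_splits) presburger+

lemma bij_betw_zigzag: "bij_betw (zigzag K) {..<K} {..<K}"
  by (rule bij_betw_imageI[OF inj_on_zigzag endo_inj_surj[OF _ _ inj_on_zigzag]])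
    (auto simp: zigzag_less)

lemma zigzag_succ_dist:
  assumes "2 \<le> K" and "j < K"
  shows "\<bar>int (zigzag K ((j + 1) mod K)) - int (zigzag K j)\<bar> \<in> {1, 2}"
proof (cases "j + 1 < K")
  case True
  then have succ: "(j + 1) mod K = j + 1"
    by simp
  consider "2 * (j + 1) < K" | "K \<le> 2 * j" | "K = 2 * j + 1" | "K = 2 * j + 2"
    by fastforce
  then have "\<bar>int (zigzag K (j + 1)) - int (zigzag K j)\<bar> \<in> {1, 2}"
  proof cases
    case 1
    then show ?thesis by (simp add: zigzag_def)
  next
    case 2
    then have "zigzag K j = zigzag K (j + 1) + 2"
      using True by (simp add: zigzag_def)
    then show ?thesis by simp
  next
    case 3
    then have "zigzag K j = zigzag K (j + 1) + 1"
      using assms by (simp add: zigzag_def)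
    then show ?thesis by simp
  next
    case 4
    then show ?thesis by (simp add: zigzag_def)
  qed
  then show ?thesis
    by (simp only: succ)
next
  case False
  then have "j + 1 = K"
    using assms(2) by simp
  moreover have "zigzag K j = 1"
    using assms \<open>j + 1 = K\<close> by (simp add: zigzag_def)
  ultimately show ?thesis
    using assms(1) by (simp add: zigzag_def)
qed

lemma bij_betw_concat_blocks:
  fixes n :: nat and k :: "nat \<Rightarrow> nat"
  assumes "\<And>i. i < n \<Longrightarrow> bij_betw (f i) (A i) {..<k i}"
  shows "bij_betw (\<lambda>(i, j). (\<Sum>t<i. k t) + f i j) (SIGMA i:{..<n}. A i) {..<\<Sum>t<n. k t}"
  using assms
proof (induction n)
  case 0
  then show ?case by (simp add: bij_betw_def)
next
  case (Suc n)
  let ?g = "\<lambda>(i, j). (\<Sum>t<i. k t) + f i j" and ?s = "\<Sum>t<n. k t"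
  have "bij_betw ((+) ?s) {..<k n} {?s..<?s + k n}"
    by (simp add: atLeast0LessThan[symmetric] add.commute)
  then have "bij_betw (\<lambda>j. ?s + f n j) (A n) {?s..<?s + k n}"
    using bij_betw_trans[OF Suc.prems[of n]] unfolding comp_def by blast
  then have "bij_betw ((\<lambda>j. ?s + f n j) \<circ> snd) ({n} \<times> A n) {?s..<?s + k n}"
    by (rule bij_betw_trans[rotated]) (auto simp: bij_betw_def inj_on_def)
  then have last_block: "bij_betw ?g ({n} \<times> A n) {?s..<?s + k n}"
    by (rule bij_betw_cong[THEN iffD1, rotated]) auto
  have "bij_betw ?g ((SIGMA i:{..<n}. A i) \<union> {n} \<times> A n) ({..<?s} \<union> {?s..<?s + k n})"
    by (rule bij_betw_combine) (use Suc last_block in auto)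
  moreover have "(SIGMA i:{..<Suc n}. A i) = (SIGMA i:{..<n}. A i) \<union> {n} \<times> A n"
    by (auto simp: less_Suc_eq)
  moreover have "{..<\<Sum>t<Suc n. k t} = {..<?s} \<union> {?s..<?s + k n}"
    by auto
  ultimately show ?case
    by simp
qed

lemma bij_betw_odd_numbers:
  "bij_betw (\<lambda>m. 2 * m + 1) {..<N} {m :: nat. odd m \<and> m \<le> 2 * N - 1}"
proof (rule bij_betw_imageI)
  show "inj_on (\<lambda>m. 2 * m + 1) {..<N}"
    by (simp add: inj_on_def)
  show "(\<lambda>m. 2 * m + 1) ` {..<N} = {m. odd m \<and> m \<le> 2 * N - 1}"
    by (auto elim!: oddE)
qed

lemma odd_prime_if_adjacent_labels_close:
  assumes "bij_betw g V {..<card V}"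
    and "\<And>u v. u \<in> V \<Longrightarrow> v \<in> V \<Longrightarrow> E u v \<Longrightarrow> \<bar>int (g u) - int (g v)\<bar> \<in> {1, 2}"
  shows "odd_prime V E"
proof -
  have "bij_betw (\<lambda>u. 2 * g u + 1) V {m. odd m \<and> m \<le> 2 * card V - 1}"
    using bij_betw_trans[OF assms(1) bij_betw_odd_numbers] by (simp add: comp_def)
  moreover have "gcd (2 * g u + 1) (2 * g v + 1) = 1" if "u \<in> V" "v \<in> V" "E u v" for u v
    using coprime_odd_if_dist_one_or_two[OF assms(2)[OF that]] by simp
  ultimately show ?thesis
    unfolding odd_prime_def by blast
qed

lemma cycles_union_vertices_eq_Sigma:
  "cycles_union_vertices n k = (SIGMA i:{..<n}. {..<k i})"
  by (auto simp: cycles_union_vertices_def)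

lemma card_cycles_union_vertices: "card (cycles_union_vertices n k) = (\<Sum>i<n. k i)"
  by (simp add: cycles_union_vertices_eq_Sigma)

definition cycles_union_numbering :: "(nat \<Rightarrow> nat) \<Rightarrow> nat \<times> nat \<Rightarrow> nat" where
  "cycles_union_numbering k = (\<lambda>(i, j). (\<Sum>t<i. k t) + zigzag (k i) j)"

lemma bij_betw_cycles_union_numbering:
  "bij_betw (cycles_union_numbering k) (cycles_union_vertices n k)
     {..<card (cycles_union_vertices n k)}"
  unfolding cycles_union_numbering_def card_cycles_union_vertices
  unfolding cycles_union_vertices_eq_Sigma
  by (rule bij_betw_concat_blocks) (rule bij_betw_zigzag)

lemma cycles_union_numbering_adjacent:
  assumes "\<And>i. i < n \<Longrightarrow> 2 \<le> k i"
    and "u \<in> cycles_union_vertices n k" "v \<in> cycles_union_vertices n k"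
    and "cycles_union_edge k u v"
  shows "\<bar>int (cycles_union_numbering k u) - int (cycles_union_numbering k v)\<bar> \<in> {1, 2}"
proof -
  obtain i j i' j' where uv: "u = (i, j)" "v = (i', j')"
    by (cases u, cases v) blast
  with assms(2-4) have "i' = i" and "i < n" "j < k i" "j' < k i"
    and succ: "j' = (j + 1) mod k i \<or> j = (j' + 1) mod k i"
    unfolding cycles_union_vertices_def cycles_union_edge_def by auto
  have "2 \<le> k i"
    using assms(1) \<open>i < n\<close> by simp
  have "int (cycles_union_numbering k u) - int (cycles_union_numbering k v) =
      int (zigzag (k i) j) - int (zigzag (k i) j')"
    unfolding cycles_union_numbering_def uv \<open>i' = i\<close> by simp
  with succ show ?thesis
    using zigzag_succ_dist[OF \<open>2 \<le> k i\<close> \<open>j < k i\<close>]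
      zigzag_succ_dist[OF \<open>2 \<le> k i\<close> \<open>j' < k i\<close>]
    by (metis abs_minus_commute)
qed

theorem theorem3p1:
  fixes n :: nat and k :: "nat \<Rightarrow> nat"
  assumes "n \<ge> 1" and "\<And>i. i < n \<Longrightarrow> k i \<ge> 3"
  shows "odd_prime (cycles_union_vertices n k) (cycles_union_edge k)"
proof (rule odd_prime_if_adjacent_labels_close)
  show "bij_betw (cycles_union_numbering k) (cycles_union_vertices n k)
      {..<card (cycles_union_vertices n k)}"
    by (rule bij_betw_cycles_union_numbering)
  have "\<And>i. i < n \<Longrightarrow> 2 \<le> k i"
    using assms(2) by fastforce
  then show "\<bar>int (cycles_union_numbering k u) - int (cycles_union_numbering k v)\<bar> \<in> {1, 2}"
    if "u \<in> cycles_union_vertices n k" "v \<in> cycles_union_vertices n k" "cycles_union_edge k u v"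
    for u v
    using that by (rule cycles_union_numbering_adjacent)
qed

end
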